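(* Let $W\in\mathbb{R}^{n\times n}$ be symmetric with nonnegative entries, $L=\operatorname{diag}(W\mathbf{1})-W$, and let $L=V^T\Lambda V$ be a full spectral decomposition with $V$ orthogonal, $\Lambda=\operatorname{diag}(\lambda_1,\dots,\lambda_n)$, $\lambda_1\le\dots\le\lambda_n$. Define $\tilde A=(\lambda_nI-\Lambda)^{1/2}V$. Let $K\ge1$. Then the ratio-cut problem $$\min_X\operatorname{tr}\{XLX^T\}\ \text{s.t. }X\in\mathcal{H}$$ and the K-means problem $$\min_{D,X}\|\tilde A-DX\|_F^2\ \text{s.t. }X\in\mathcal{H}$$ have the same solutions $X$.
   Context: $\mathbf{1}$ is the all-ones vector, $\operatorname{diag}(v)$ the diagonal matrix with diagonal $v$. $\mathcal{F}$ is the set of matrices $F\in\{0,1\}^{K\times n}$ in which every column has exactly one entry $1$ (rows are cluster indicator vectors, each cluster assumed nonempty), and $\mathcal{H}=\{(FF^T)^{-1/2}F:F\in\mathcal{F}\}$ is the set of normalized indicator matrices. *)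

theory Defs
  imports "HOL-Analysis.Analysis"
begin

definition diag_mat :: "real^'n \<Rightarrow> real^'n^'n" where
  "diag_mat v = (\<chi> i j. if i = j then v $ i else 0)"

definition ones :: "real^'n" where
  "ones = (\<chi> i. 1)"

text \<open>The set F of K x n cluster indicator matrices (rows = clusters, indexed by 'k;
  columns = points, indexed by 'n): 0/1 entries, each column has exactly one 1,
  each cluster (row) nonempty.\<close>
definition indicator_mats :: "(real^'n^'k) set" where
  "indicator_mats = {F. (\<forall>i j. F $ i $ j = 0 \<or> F $ i $ j = 1)
      \<and> (\<forall>j. \<exists>!i. F $ i $ j = 1)
      \<and> (\<forall>i. \<exists>j. F $ i $ j = 1)}"

text \<open>(F F^T)^(-1/2) for F in the set above: F F^T is diagonal with positive
  diagonal, so its inverse square root is the diagonal matrix of the reciprocal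
  square roots of its diagonal entries.\<close>
definition inv_sqrt_diag :: "real^'k^'k \<Rightarrow> real^'k^'k" where
  "inv_sqrt_diag M = diag_mat (\<chi> i. 1 / sqrt (M $ i $ i))"

definition normalized_indicator_mats :: "(real^'n^'k) set" where
  "normalized_indicator_mats =
     {X. \<exists>F\<in>indicator_mats. X = inv_sqrt_diag (F ** transpose F) ** F}"

definition frob_sq :: "real^'n^'m \<Rightarrow> real" where
  "frob_sq M = (\<Sum>i\<in>UNIV. \<Sum>j\<in>UNIV. (M $ i $ j)^2)"

end

theory Submission imports Defs begin

text \<open>A normalized indicator matrix X has orthonormal rows, X X^T = I. Hence for every D the
  Pythagorean splitting |A - D X|^2 = |A|^2 - |A X^T|^2 + |D - A X^T|^2 holds (Frobenius norms),
  so the optimal D is A X^T. With c = lambda_n the shifted spectral matrix satisfies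
  A^T A = c I - L, whence |A X^T|^2 = c K - tr(X L X^T). The K-means objective is therefore a
  constant plus the ratio-cut objective plus a nonnegative term that vanishes at D = A X^T, and
  the two problems have the same minimizers.\<close>

lemma frob_sq_eq_sum_norm_rows: "frob_sq (M::real^'n^'m) = (\<Sum>i\<in>UNIV. norm (M $ i) ^ 2)"
  unfolding frob_sq_def power2_norm_eq_inner inner_vec_def by (simp add: power2_eq_square)

lemma frob_sq_nonneg: "frob_sq M \<ge> 0"
  unfolding frob_sq_def by (intro sum_nonneg) auto

lemma frob_sq_eq_trace: "frob_sq (M::real^'n^'m) = trace (transpose M ** M)"
proof -
  have "frob_sq M = (\<Sum>i\<in>UNIV. \<Sum>j\<in>UNIV. M $ i $ j * M $ i $ j)"
    by (simp add: frob_sq_def power2_eq_square)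
  also have "\<dots> = (\<Sum>j\<in>UNIV. \<Sum>i\<in>UNIV. M $ i $ j * M $ i $ j)"
    by (rule sum.swap)
  also have "\<dots> = trace (transpose M ** M)"
    by (simp add: trace_def matrix_matrix_mult_def transpose_def)
  finally show ?thesis .
qed

lemma matrix_add_rdistrib: "((A::'a::semiring_1^'n^'m) + B) ** C = A ** C + B ** C"
  by (vector matrix_matrix_mult_def sum.distrib[symmetric] field_simps)

lemma transpose_diag_mat [simp]: "transpose (diag_mat v) = diag_mat v"
  by (simp add: diag_mat_def transpose_def vec_eq_iff)

lemma diag_mat_mult: "diag_mat v ** diag_mat w = diag_mat (\<chi> i. v $ i * w $ i)"
  by (simp add: diag_mat_def matrix_matrix_mult_def vec_eq_iff
      if_distrib[where f = "\<lambda>x. x * _"] sum.delta cong: if_cong)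

lemma diag_mat_add: "diag_mat v + diag_mat w = diag_mat (v + w)"
  by (simp add: diag_mat_def vec_eq_iff)

lemma diag_mat_const: "diag_mat (\<chi> i. c) = c *\<^sub>R mat 1"
  by (simp add: diag_mat_def mat_def vec_eq_iff)

lemma norm_diff_vector_matrix_mult_sq:
  fixes X :: "real^'n^'k" and a :: "real^'n" and d :: "real^'k"
  assumes "X ** transpose X = mat 1"
  shows "norm (a - d v* X) ^ 2 = norm a ^ 2 - norm (X *v a) ^ 2 + norm (d - X *v a) ^ 2"
proof -
  have "X *v (d v* X) = d"
    using assms by (simp flip: transpose_matrix_vector add: matrix_vector_mul_assoc)
  then have "inner (d v* X) (d v* X) = inner d d"
    by (simp only: dot_lmul_matrix)
  moreover have "inner (d v* X) a = inner d (X *v a)"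
    by (simp add: dot_lmul_matrix)
  ultimately show ?thesis
    by (simp add: power2_norm_eq_inner inner_diff_left inner_diff_right inner_commute)
qed

lemma frob_sq_diff_matrix_mult:
  fixes X :: "real^'n^'k" and A :: "real^'n^'m" and D :: "real^'k^'m"
  assumes XX: "X ** transpose X = mat 1"
  shows "frob_sq (A - D ** X)
           = frob_sq A - frob_sq (A ** transpose X) + frob_sq (D - A ** transpose X)"
proof -
  have rows: "(A ** transpose X) $ i = X *v A $ i" for i
    by (simp add: matrix_matrix_mult_def matrix_vector_mult_def vec_eq_iff transpose_def
        mult.commute)
  have "(D ** X) $ i = D $ i v* X" for i
    by (simp add: matrix_matrix_mult_def vector_matrix_mult_def vec_eq_iff)
  then have "frob_sq (A - D ** X) = (\<Sum>i\<in>UNIV. norm (A $ i - D $ i v* X) ^ 2)"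
    by (simp add: frob_sq_eq_sum_norm_rows)
  also have "\<dots> = (\<Sum>i\<in>UNIV. norm (A $ i) ^ 2 - norm (X *v A $ i) ^ 2
                                 + norm (D $ i - X *v A $ i) ^ 2)"
    by (intro sum.cong refl norm_diff_vector_matrix_mult_sq XX)
  also have "\<dots> = frob_sq A - frob_sq (A ** transpose X) + frob_sq (D - A ** transpose X)"
    by (simp add: sum.distrib sum_subtractf frob_sq_eq_sum_norm_rows rows)
  finally show ?thesis .
qed

lemma normalized_indicator_mats_orthonormal_rows:
  assumes "X \<in> (normalized_indicator_mats :: (real^'n^'k) set)"
  shows "X ** transpose X = mat 1"
proof -
  obtain F where F: "F \<in> indicator_mats" and XF: "X = inv_sqrt_diag (F ** transpose F) ** F"
    using assms unfolding normalized_indicator_mats_def by blast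
  define d where "d k = (F ** transpose F) $ k $ k" for k
  have F01: "F $ i $ j = 0 \<or> F $ i $ j = 1"
   and F_col: "\<exists>!i. F $ i $ j = 1"
   and F_row: "\<exists>j. F $ i $ j = 1" for i j
    using F unfolding indicator_mats_def by blast+
  have d_eq: "d k = (\<Sum>j\<in>UNIV. F $ k $ j * F $ k $ j)" for k
    by (simp add: d_def matrix_matrix_mult_def transpose_def)
  have d_pos: "d k > 0" for k
  proof -
    obtain j where j: "F $ k $ j = 1" using F_row by blast
    have "F $ k $ j * F $ k $ j \<le> d k" unfolding d_eq by (rule member_le_sum) auto
    then show ?thesis using j by simp
  qed
  have disjoint_rows: "F $ k $ j * F $ l $ j = 0" if "k \<noteq> l" for k l j
    using F01[of k j] F01[of l j] F_col[of j] that by auto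
  have X_entry: "X $ k $ j = F $ k $ j / sqrt (d k)" for k j
    by (simp add: XF inv_sqrt_diag_def diag_mat_def matrix_matrix_mult_def d_def
        if_distrib[where f = "\<lambda>x. x * _"] sum.delta cong: if_cong)
  have "(X ** transpose X) $ k $ l
          = (\<Sum>j\<in>UNIV. F $ k $ j * F $ l $ j) / (sqrt (d k) * sqrt (d l))" for k l
    by (simp add: matrix_matrix_mult_def transpose_def X_entry sum_divide_distrib)
  then have "(X ** transpose X) $ k $ l = mat 1 $ k $ l" for k l
    using d_pos[of k] by (cases "k = l") (simp_all add: mat_def disjoint_rows flip: d_eq)
  then show ?thesis by (simp add: vec_eq_iff)
qed

lemma gram_shifted_spectral:
  fixes V L :: "real^'n^'n" and lam :: "real^'n"
  assumes "transpose V ** V = mat 1"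
    and "\<forall>i. lam $ i \<le> c"
    and "L = transpose V ** diag_mat lam ** V"
  shows "transpose (diag_mat (\<chi> i. sqrt (c - lam $ i)) ** V)
           ** (diag_mat (\<chi> i. sqrt (c - lam $ i)) ** V) + L = c *\<^sub>R mat 1"
proof -
  let ?s = "\<chi> i. sqrt (c - lam $ i)"
  have "(\<chi> i. ?s $ i * ?s $ i) + lam = (\<chi> i. c)"
    using assms(2) by (simp add: vec_eq_iff)
  then have "diag_mat ?s ** diag_mat ?s + diag_mat lam = c *\<^sub>R mat 1"
    by (simp add: diag_mat_mult diag_mat_add diag_mat_const)
  moreover have "transpose (diag_mat ?s ** V) ** (diag_mat ?s ** V) + L
                   = transpose V ** (diag_mat ?s ** diag_mat ?s + diag_mat lam) ** V"
    by (simp add: assms(3) matrix_transpose_mul matrix_mul_assoc matrix_add_ldistrib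
        matrix_add_rdistrib)
  ultimately show ?thesis
    using assms(1) by (simp add: matrix_scalar_ac scalar_matrix_assoc[symmetric])
qed

lemma frob_sq_mult_transpose_orthonormal:
  fixes X :: "real^'n^'k" and A L :: "real^'n^'n"
  assumes XX: "X ** transpose X = mat 1"
    and gram: "transpose A ** A + L = c *\<^sub>R mat 1"
  shows "frob_sq (A ** transpose X) = c * real CARD('k) - trace (X ** L ** transpose X)"
proof -
  have "frob_sq (A ** transpose X) + trace (X ** L ** transpose X)
          = trace (X ** (transpose A ** A + L) ** transpose X)"
    by (simp add: frob_sq_eq_trace matrix_transpose_mul matrix_mul_assoc matrix_add_ldistrib
        matrix_add_rdistrib trace_add)
  also have "\<dots> = trace (c *\<^sub>R mat 1 :: real^'k^'k)"
    using XX by (simp add: gram matrix_scalar_ac scalar_matrix_assoc[symmetric])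
  also have "\<dots> = c * real CARD('k)"
    by (simp add: trace_def mat_def)
  finally show ?thesis by linarith
qed

lemma minimizers_eq_joint_minimizers:
  fixes g :: "'d \<Rightarrow> 'x \<Rightarrow> real"
  assumes split: "\<And>D Y. Y \<in> S \<Longrightarrow> g D Y = C + t Y + h D Y"
    and h_nonneg: "\<And>D Y. 0 \<le> h D Y"
    and h_zero: "\<And>Y. Y \<in> S \<Longrightarrow> h (D\<^sub>0 Y) Y = 0"
  shows "{X. X \<in> S \<and> (\<forall>Y\<in>S. t X \<le> t Y)}
       = {X. X \<in> S \<and> (\<exists>D. \<forall>D'. \<forall>Y\<in>S. g D X \<le> g D' Y)}"
proof -
  have g_ge: "C + t Y \<le> g D Y" and g_min: "g (D\<^sub>0 Y) Y = C + t Y" if "Y \<in> S" for D Y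
    using split[OF that] h_nonneg h_zero[OF that] by simp_all
  have "(\<forall>Y\<in>S. t X \<le> t Y) \<longleftrightarrow> (\<exists>D. \<forall>D'. \<forall>Y\<in>S. g D X \<le> g D' Y)" if X: "X \<in> S" for X
  proof
    assume "\<forall>Y\<in>S. t X \<le> t Y"
    then have "\<forall>D'. \<forall>Y\<in>S. g (D\<^sub>0 X) X \<le> g D' Y"
      using g_ge g_min[OF X] by (metis add_le_cancel_left order_trans)
    then show "\<exists>D. \<forall>D'. \<forall>Y\<in>S. g D X \<le> g D' Y" ..
  next
    assume "\<exists>D. \<forall>D'. \<forall>Y\<in>S. g D X \<le> g D' Y"
    then obtain D where "\<forall>D'. \<forall>Y\<in>S. g D X \<le> g D' Y" ..
    then show "\<forall>Y\<in>S. t X \<le> t Y"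
      using g_ge[OF X] g_min by (metis add_le_cancel_left order_trans)
  qed
  then show ?thesis by blast
qed

theorem proposition4:
  fixes W :: "real^('n::{finite,linorder})^('n::{finite,linorder})"
    and V :: "real^('n::{finite,linorder})^('n::{finite,linorder})"
    and lam :: "real^('n::{finite,linorder})"
    and L :: "real^('n::{finite,linorder})^('n::{finite,linorder})"
    and A :: "real^('n::{finite,linorder})^('n::{finite,linorder})"
  assumes W_sym: "transpose W = W"
    and W_nonneg: "\<forall>i j. W $ i $ j \<ge> 0"
    and L_def: "L = diag_mat (W *v ones) - W"
    and V_orth: "orthogonal_matrix V"
    and lam_sorted: "\<forall>i j. i \<le> j \<longrightarrow> lam $ i \<le> lam $ j"
    and spec: "L = transpose V ** diag_mat lam ** V"
    and A_def: "A = diag_mat (\<chi> i. sqrt (lam $ (Max UNIV) - lam $ i)) ** V"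
  shows "{X :: real^('n::{finite,linorder})^('k::finite). X \<in> normalized_indicator_mats \<and>
            (\<forall>Y :: real^('n::{finite,linorder})^('k::finite) \<in> normalized_indicator_mats. trace (X ** L ** transpose X) \<le> trace (Y ** L ** transpose Y))}
       = {X :: real^('n::{finite,linorder})^('k::finite). X \<in> normalized_indicator_mats \<and>
            (\<exists>D :: real^('k::finite)^('n::{finite,linorder}). \<forall>D' :: real^('k::finite)^('n::{finite,linorder}). \<forall>Y :: real^('n::{finite,linorder})^('k::finite) \<in> normalized_indicator_mats.
               frob_sq (A - D ** X) \<le> frob_sq (A - D' ** Y))}"
proof (rule minimizers_eq_joint_minimizers[where D\<^sub>0 = "\<lambda>Y. A ** transpose Y"])
  let ?c = "lam $ Max UNIV"
  have "transpose V ** V = mat 1" using V_orth orthogonal_matrix by blast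
  moreover have "\<forall>i. lam $ i \<le> ?c" using lam_sorted by (simp add: Max_ge)
  ultimately have gram: "transpose A ** A + L = ?c *\<^sub>R mat 1"
    unfolding A_def using spec by (rule gram_shifted_spectral)
  fix D :: "real^'k^('n::{finite,linorder})" and Y :: "real^('n::{finite,linorder})^'k"
  assume "Y \<in> normalized_indicator_mats"
  then have YY: "Y ** transpose Y = mat 1" by (rule normalized_indicator_mats_orthonormal_rows)
  show "frob_sq (A - D ** Y) = (frob_sq A - ?c * real CARD('k))
               + trace (Y ** L ** transpose Y) + frob_sq (D - A ** transpose Y)"
    using frob_sq_diff_matrix_mult[OF YY, of A D] frob_sq_mult_transpose_orthonormal[OF YY gram]
    by linarith
qed (simp_all add: frob_sq_nonneg, simp add: frob_sq_def)

end
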